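(* For every integer $n\ge0$, the Hankel determinant $d(n,s,q)=\det\big(f(i+j,s,q)\big)_{i,j=0}^n$ equals $$d(n,s,q)=q^{\frac{n^2(n+1)}{2}}\,\frac{\prod_{j=0}^n\big(\frac{s}{q^{2j-1}};q^2\big)_{2j}\;\prod_{j=0}^n(q;q)_j}{\prod_{j=0}^n(-q;q)_{j+n}}.$$
   Context: $q,s$ are indeterminates. $(x;q)_n=\prod_{j=0}^{n-1}(1-q^jx)$. The Gaussian binomial coefficient is $\begin{bmatrix} n\\ j\end{bmatrix}_q=\frac{(q;q)_n}{(q;q)_j(q;q)_{n-j}}$ for $0\le j\le n$ and $0$ otherwise. $f(n,s,q)=\dfrac{\sum_{j=0}^n s^j\begin{bmatrix} n\\ j\end{bmatrix}_{q^2}}{(-q;q)_n}$. *)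

theory Defs
  imports "Jordan_Normal_Form.Determinant"
begin

definition qpoch :: "'a::comm_ring_1 \<Rightarrow> 'a \<Rightarrow> nat \<Rightarrow> 'a" where
  "qpoch x q n = (\<Prod>j<n. 1 - q ^ j * x)"

definition gauss_binom :: "nat \<Rightarrow> nat \<Rightarrow> 'a::field \<Rightarrow> 'a" where
  "gauss_binom n j q =
     (if j \<le> n then qpoch q q n / (qpoch q q j * qpoch q q (n - j)) else 0)"

definition f_fun :: "nat \<Rightarrow> 'a::field \<Rightarrow> 'a \<Rightarrow> 'a" where
  "f_fun n s q = (\<Sum>j=0..n. s ^ j * gauss_binom n j (q\<^sup>2)) / qpoch (- q) q n"

definition hankel_d :: "nat \<Rightarrow> 'a::field \<Rightarrow> 'a \<Rightarrow> 'a" where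
  "hankel_d n s q = det (mat (n + 1) (n + 1) (\<lambda>(i, j). f_fun (i + j) s q))"

end

theory Submission
  imports Defs "HOL-Computational_Algebra.Polynomial"
begin

text \<open>
  The numerator of f(m) = f(m,s,q) is a Rogers-Szego polynomial in base q^2; its three-term
  recurrence gives f(m+1) (1 + q^(m+1)) = (1 + s) f(m) - s (1 - q^m) f(m-1).
  Let L be the linear functional x^m \<mapsto> f(m). For monic polynomials N_k, M_l of degrees k, l
  the Hankel determinant equals det (L(N_k M_l)), as the coefficient matrices are unitriangular.
  With N_k = \<Prod>_{i<k} (x - q^i) and M_l = \<Prod>_{i<l} (x - s q^i) the recurrence yields the closed
  form L(N_k M_l) = \<alpha>_k \<beta>_l q^(kl) / (-q;q)_(k+l), where \<alpha>_k = \<Prod>_{i<k} (s - q^(2i+1)) and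
  \<beta>_l = \<Prod>_{i<l} (1 - s q^(2i+1)). After removing the factors \<alpha>_k / (-q;q)_(k+n) from the rows and
  \<beta>_l from the columns, the matrix is the evaluation of the polynomials
  x^l \<Prod>_{l<i\<le>n} (1 + q^i x) at the points q^k, whose determinant is the Vandermonde
  determinant of q^0, ..., q^n.
\<close>

lemma prod_lessThan_add: "(\<Prod>i<a + b. h i) = (\<Prod>i<a. h i) * (\<Prod>i<b. h (a + i))"
  for h :: "nat \<Rightarrow> 'a::comm_monoid_mult"
  by (induction b) (simp_all add: mult.assoc)

lemma prod_uminus_lessThan: "(\<Prod>i<j. - x i) = (-1) ^ j * (\<Prod>i<j. x i)"
  for x :: "nat \<Rightarrow> 'a::comm_ring_1"
  by (induction j) simp_all

lemma sum_odd_lessThan: "(\<Sum>i<j. 2 * i + 1) = j * (j :: nat)"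
  by (induction j) simp_all

lemma qpoch_0 [simp]: "qpoch x q 0 = 1"
  by (simp add: qpoch_def)

lemma qpoch_Suc: "qpoch x q (Suc n) = qpoch x q n * (1 - q ^ n * x)"
  by (simp add: qpoch_def)

lemma qpoch_neg_Suc: "qpoch (- q) q (Suc n) = qpoch (- q) q n * (1 + q ^ Suc n)"
  by (simp add: qpoch_Suc mult.commute)

lemma qpoch_neg_split:
  fixes q :: "'a::comm_ring_1"
  shows "l \<le> n \<Longrightarrow> qpoch (- q) q (k + n) = qpoch (- q) q (k + l) * (\<Prod>i\<in>{Suc l..n}. 1 + q ^ i * q ^ k)"
proof (induction n)
  case (Suc n)
  then show ?case
    by (cases "l = Suc n") (simp_all add: qpoch_Suc power_add ac_simps)
qed simp

lemma prod_power_diff: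
  fixes q :: "'a::comm_ring_1"
  shows "(\<Prod>i<k. q ^ k - q ^ i) = (-1) ^ k * q ^ (\<Sum>i<k. i) * qpoch q q k"
proof -
  have "(\<Prod>i<k. q ^ k - q ^ i) = (\<Prod>i<k. - (q ^ i * (1 - q ^ (k - i))))"
    by (intro prod.cong refl) (simp add: algebra_simps power_add[symmetric])
  also have "(\<Prod>i<k. 1 - q ^ (k - i)) = (\<Prod>i<k. 1 - q ^ Suc i)"
    using prod.nat_diff_reindex[of "\<lambda>i. 1 - q ^ Suc i" k] by (simp add: Suc_diff_Suc)
  then have "(\<Prod>i<k. - (q ^ i * (1 - q ^ (k - i)))) = (-1) ^ k * (\<Prod>i<k. q ^ i) * qpoch q q k"
    by (simp add: prod_uminus_lessThan prod.distrib qpoch_def mult.commute)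
  finally show ?thesis
    by (simp add: power_sum)
qed

section \<open>Gaussian binomials and Rogers-Szego polynomials\<close>

lemma gauss_binom_eq_0: "m < j \<Longrightarrow> gauss_binom m j q = 0"
  by (simp add: gauss_binom_def)

definition rogers_szego :: "nat \<Rightarrow> 'a::field \<Rightarrow> 'a \<Rightarrow> 'a" where
  "rogers_szego m s q = (\<Sum>j=0..m. s ^ j * gauss_binom m j q)"

lemma rogers_szego_eq_sum_lessThan:
  "m < K \<Longrightarrow> rogers_szego m s q = (\<Sum>j<K. s ^ j * gauss_binom m j q)"
  unfolding rogers_szego_def
  by (rule sum.mono_neutral_left) (auto simp: gauss_binom_eq_0)

locale not_root_of_unity =
  fixes q :: "'a::field"
  assumes power_ne_one: "k \<ge> 1 \<Longrightarrow> q ^ k \<noteq> 1"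
begin

lemma power_not_root_of_unity: "m \<ge> 1 \<Longrightarrow> not_root_of_unity (q ^ m)"
  by unfold_locales (simp add: power_mult[symmetric] power_ne_one)

lemma one_minus_power_nonzero: "k \<ge> 1 \<Longrightarrow> 1 - q ^ k \<noteq> 0"
  using power_ne_one by simp

lemma one_plus_power_nonzero: "k \<ge> 1 \<Longrightarrow> 1 + q ^ k \<noteq> 0"
proof
  assume "k \<ge> 1" "1 + q ^ k = 0"
  then have "q ^ k = -1"
    by (simp add: eq_neg_iff_add_eq_0 add.commute)
  then have "q ^ (2 * k) = 1"
    using power_mult[of q k 2] by (simp add: mult.commute)
  with \<open>k \<ge> 1\<close> power_ne_one[of "2 * k"] show False
    by simp
qed

lemma qpoch_self_nonzero: "qpoch q q n \<noteq> 0"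
  using one_minus_power_nonzero[of "Suc _"]
  by (auto simp: qpoch_def mult.commute)

lemma qpoch_neg_self_nonzero: "qpoch (- q) q n \<noteq> 0"
  using one_plus_power_nonzero[of "Suc _"]
  by (auto simp: qpoch_def mult.commute)

lemma gauss_binom_0 [simp]: "gauss_binom m 0 q = 1"
  using qpoch_self_nonzero by (simp add: gauss_binom_def)

lemma gauss_binom_self [simp]: "gauss_binom m m q = 1"
  using qpoch_self_nonzero by (simp add: gauss_binom_def)

lemma gauss_binom_Suc_Suc:
  "gauss_binom (Suc m) (Suc j) q = gauss_binom m j q + q ^ Suc j * gauss_binom m (Suc j) q"
proof (cases "j < m")
  case True
  define a where "a = qpoch q q m"
  define b where "b = qpoch q q j"
  define d where "d = qpoch q q (m - Suc j)"
  define X where "X = q ^ j"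
  define Y where "Y = q ^ (m - Suc j)"
  have "m = j + 1 + (m - Suc j)"
    using True by simp
  then have qm: "q ^ m = X * q * Y"
    unfolding X_def Y_def by (metis power_add power_one_right)
  have mj: "m - j = Suc (m - Suc j)"
    using True by simp
  have nz: "a \<noteq> 0" "b \<noteq> 0" "d \<noteq> 0" "1 - X * q \<noteq> 0" "1 - Y * q \<noteq> 0"
    using qpoch_self_nonzero one_minus_power_nonzero[of "Suc j"]
      one_minus_power_nonzero[of "Suc (m - Suc j)"]
    by (auto simp: a_def b_def d_def X_def Y_def mult.commute)
  have "gauss_binom (Suc m) (Suc j) q
      = a * (1 - X * q * Y * q) / (b * (1 - X * q) * (d * (1 - Y * q)))"
    using True by (simp add: gauss_binom_def qpoch_Suc qm mj a_def b_def d_def X_def Y_def)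
  also have "\<dots> = a / (b * (d * (1 - Y * q))) + X * q * (a / (b * (1 - X * q) * d))"
    using nz by (simp add: divide_simps) (simp add: algebra_simps)
  also have "\<dots> = gauss_binom m j q + q ^ Suc j * gauss_binom m (Suc j) q"
    using True by (simp add: gauss_binom_def qpoch_Suc mj a_def b_def d_def X_def Y_def mult.commute)
  finally show ?thesis .
next
  case False
  then show ?thesis
    by (cases "j = m") (simp_all add: gauss_binom_eq_0)
qed

lemma gauss_binom_absorb:
  "(1 - q ^ Suc m) * gauss_binom m j q = (1 - q ^ Suc j) * gauss_binom (Suc m) (Suc j) q"
proof (cases "j \<le> m")
  case True
  have nz: "qpoch q q j \<noteq> 0" "qpoch q q (m - j) \<noteq> 0" "1 - q * q ^ j \<noteq> 0"
    using qpoch_self_nonzero one_minus_power_nonzero[of "Suc j"] by auto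
  show ?thesis
    using True nz by (simp add: gauss_binom_def qpoch_Suc Suc_diff_le divide_simps mult.commute)
next
  case False
  then show ?thesis
    by (simp add: gauss_binom_eq_0)
qed

lemma rogers_szego_Suc_Suc:
  "rogers_szego (Suc (Suc m)) s q
     = (1 + s) * rogers_szego (Suc m) s q - s * (1 - q ^ Suc m) * rogers_szego m s q"
proof -
  let ?g = "\<lambda>m j. gauss_binom m j q"
  define S where "S = (\<Sum>j<Suc (Suc m). s ^ Suc j * ?g (Suc m) (Suc j))"
  have three_term: "?g (Suc (Suc m)) (Suc j) = ?g (Suc m) j + ?g (Suc m) (Suc j) - (1 - q ^ Suc m) * ?g m j"
    for j using gauss_binom_Suc_Suc[of "Suc m" j] gauss_binom_absorb[of m j]
    by (simp add: algebra_simps)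
  have shift: "rogers_szego (Suc k) s q = 1 + (\<Sum>j<Suc k. s ^ Suc j * ?g (Suc k) (Suc j))" for k
  proof -
    have "rogers_szego (Suc k) s q = (\<Sum>j<Suc (Suc k). s ^ j * ?g (Suc k) j)"
      by (rule rogers_szego_eq_sum_lessThan) simp
    then show ?thesis
      by (subst (asm) sum.lessThan_Suc_shift) simp
  qed
  have "rogers_szego (Suc (Suc m)) s q
      = 1 + (\<Sum>j<Suc (Suc m). s ^ Suc j * ?g (Suc (Suc m)) (Suc j))"
    by (rule shift)
  also have "\<dots> = 1 + (s * (\<Sum>j<Suc (Suc m). s ^ j * ?g (Suc m) j) + S
                   - s * (1 - q ^ Suc m) * (\<Sum>j<Suc (Suc m). s ^ j * ?g m j))"
    unfolding S_def three_term
    by (simp only: sum_distrib_left sum.distrib sum_subtractf algebra_simps power_Suc)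
  also have "(\<Sum>j<Suc (Suc m). s ^ j * ?g (Suc m) j) = rogers_szego (Suc m) s q"
    by (rule rogers_szego_eq_sum_lessThan[symmetric]) simp
  also have "(\<Sum>j<Suc (Suc m). s ^ j * ?g m j) = rogers_szego m s q"
    by (rule rogers_szego_eq_sum_lessThan[symmetric]) simp
  also have "S = rogers_szego (Suc m) s q - 1"
    unfolding S_def shift[of m] by (simp add: gauss_binom_eq_0)
  finally show ?thesis
    by (simp add: algebra_simps)
qed

end

section \<open>Moment functionals\<close>

definition moment :: "(nat \<Rightarrow> 'a::comm_ring_1) \<Rightarrow> 'a poly \<Rightarrow> 'a" where
  "moment \<mu> p = (\<Sum>m\<le>degree p. coeff p m * \<mu> m)"

lemma moment_eq_sum_lessThan:
  "degree p < K \<Longrightarrow> moment \<mu> p = (\<Sum>m<K. coeff p m * \<mu> m)"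
  unfolding moment_def by (rule sum.mono_neutral_left) (auto simp: coeff_eq_0)

lemma moment_0 [simp]: "moment \<mu> 0 = 0"
  by (simp add: moment_def)

lemma moment_1 [simp]: "moment \<mu> 1 = \<mu> 0"
  by (simp add: moment_def)

lemma moment_add: "moment \<mu> (p + r) = moment \<mu> p + moment \<mu> r"
proof -
  define K where "K = Suc (max (degree p) (degree r))"
  have "degree (p + r) < K" "degree p < K" "degree r < K"
    unfolding K_def using degree_add_le_max[of p r] by auto
  then show ?thesis
    by (simp add: moment_eq_sum_lessThan[of _ K] sum.distrib distrib_right)
qed

lemma moment_smult: "moment \<mu> (smult c p) = c * moment \<mu> p"
proof -
  have "degree (smult c p) < Suc (degree p)"
    using degree_smult_le[of c p] by auto
  then show ?thesis
    by (simp add: moment_eq_sum_lessThan[of _ "Suc (degree p)"] sum_distrib_left mult.assoc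
        del: sum.lessThan_Suc)
qed

lemma moment_sum: "moment \<mu> (\<Sum>i\<in>A. h i) = (\<Sum>i\<in>A. moment \<mu> (h i))"
  by (induction A rule: infinite_finite_induct) (auto simp: moment_add)

lemma moment_pCons_0:
  "degree p < K \<Longrightarrow> moment \<mu> (pCons 0 p) = (\<Sum>m<K. coeff p m * \<mu> (Suc m))"
  using degree_pCons_le[of 0 p]
  by (subst moment_eq_sum_lessThan[of _ "Suc K"]) (simp_all add: sum.lessThan_Suc_shift del: sum.lessThan_Suc)

lemma moment_monom_mult:
  assumes "degree r < K"
  shows "moment \<mu> (monom c a * r) = c * (\<Sum>b<K. coeff r b * \<mu> (a + b))"
proof -
  have shift: "(\<Sum>m<a + K. if m < a then 0 else h (m - a)) = (\<Sum>b<K. h b)" for h :: "nat \<Rightarrow> 'a"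
    by (induction K) auto
  have "degree (monom c a * r) \<le> a + degree r"
    using degree_mult_le[of "monom c a" r] degree_monom_le[of c a] by simp
  then have "moment \<mu> (monom c a * r) = (\<Sum>m<a + K. coeff (monom c a * r) m * \<mu> m)"
    using assms by (intro moment_eq_sum_lessThan) simp
  also have "\<dots> = (\<Sum>m<a + K. if m < a then 0 else c * (coeff r (m - a) * \<mu> (a + (m - a))))"
    by (rule sum.cong) (auto simp: coeff_monom_mult)
  also have "\<dots> = (\<Sum>b<K. c * (coeff r b * \<mu> (a + b)))"
    by (rule shift)
  finally show ?thesis
    by (simp add: sum_distrib_left)
qed

lemma moment_mult:
  assumes "degree p < K" "degree r < K"
  shows "moment \<mu> (p * r) = (\<Sum>a<K. \<Sum>b<K. coeff p a * coeff r b * \<mu> (a + b))"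
proof -
  obtain K' where K: "K = Suc K'"
    using assms by (cases K) auto
  have "p = (\<Sum>a<K. monom (coeff p a) a)"
    using assms poly_as_sum_of_monoms'[of p K'] by (simp add: K lessThan_Suc_atMost)
  then have "p * r = (\<Sum>a<K. monom (coeff p a) a * r)"
    by (metis sum_distrib_right)
  then show ?thesis
    using assms by (simp add: moment_sum moment_monom_mult sum_distrib_left mult.assoc)
qed

section \<open>Determinants of Hankel and Vandermonde type\<close>

lemma mat_times_mat:
  fixes f h :: "nat \<times> nat \<Rightarrow> 'a::comm_ring_1"
  shows "mat n n f * mat n n h = mat n n (\<lambda>(i, j). \<Sum>k<n. f (i, k) * h (k, j))"
  by (rule eq_matI) (auto simp: scalar_prod_def atLeast0LessThan intro!: sum.cong)

lemma det_mat_diag: "det (mat_diag n f) = (\<Prod>i<n. f i)"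
proof -
  have "det (mat_diag n f) = prod_list (diag_mat (mat_diag n f))"
    by (rule det_upper_triangular) (auto simp: upper_triangular_def mat_diag_def)
  then show ?thesis
    by (simp add: prod_list_diag_prod mat_diag_def atLeast0LessThan)
qed

lemma det_mat_lower_triangular:
  assumes "\<And>i j. i < j \<Longrightarrow> j < n \<Longrightarrow> f (i, j) = 0"
  shows "det (mat n n f) = (\<Prod>i<n. f (i, i))"
proof -
  have "det (mat n n f) = prod_list (diag_mat (mat n n f))"
    by (rule det_lower_triangular[of n]) (use assms in auto)
  then show ?thesis
    by (simp add: prod_list_diag_prod atLeast0LessThan)
qed

lemma det_mat_upper_triangular:
  assumes "\<And>i j. j < i \<Longrightarrow> i < n \<Longrightarrow> f (i, j) = 0"
  shows "det (mat n n f) = (\<Prod>i<n. f (i, i))"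
proof -
  have "det (mat n n f) = prod_list (diag_mat (mat n n f))"
    by (rule det_upper_triangular[of _ n]) (use assms in \<open>auto simp: upper_triangular_def\<close>)
  then show ?thesis
    by (simp add: prod_list_diag_prod atLeast0LessThan)
qed

lemma det_mult3:
  fixes A B C :: "'a::comm_ring_1 mat"
  assumes "A \<in> carrier_mat n n" "B \<in> carrier_mat n n" "C \<in> carrier_mat n n"
  shows "det (A * B * C) = det A * det B * det C"
  by (simp add: det_mult[OF mult_carrier_mat[OF assms(1,2)] assms(3)] det_mult[OF assms(1,2)])

lemma det_mat_scaled:
  fixes A :: "nat \<times> nat \<Rightarrow> 'a::comm_ring_1"
  shows "det (mat n n (\<lambda>(i, j). a i * A (i, j) * b j))
           = (\<Prod>i<n. a i) * det (mat n n A) * (\<Prod>j<n. b j)"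
proof -
  have c: "mat_diag n a \<in> carrier_mat n n" "mat n n A \<in> carrier_mat n n"
    "mat_diag n b \<in> carrier_mat n n"
    by auto
  have "mat n n (\<lambda>(i, j). a i * A (i, j) * b j) = mat_diag n a * mat n n A * mat_diag n b"
    by (subst mat_diag_mult_left[of _ _ n], simp, subst mat_diag_mult_right[of _ n], simp)
       (rule eq_matI, auto)
  then show ?thesis
    by (simp only: det_mult3[OF c] det_mat_diag)
qed

lemma det_coeff_mat_monic:
  assumes "\<And>k. degree (P k) = k" "\<And>k. lead_coeff (P k) = 1"
  shows "det (mat n n (\<lambda>(k, a). coeff (P k) a)) = 1"
    and "det (mat n n (\<lambda>(a, k). coeff (P k) a)) = 1"
  using assms
  by (subst det_mat_lower_triangular det_mat_upper_triangular; auto simp: coeff_eq_0)+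

lemma det_hankel_eq_det_moment_mult:
  assumes P: "\<And>k. degree (P k) = k" "\<And>k. lead_coeff (P k) = 1"
    and R: "\<And>l. degree (R l) = l" "\<And>l. lead_coeff (R l) = 1"
  shows "det (mat n n (\<lambda>(i, j). \<mu> (i + j))) = det (mat n n (\<lambda>(k, l). moment \<mu> (P k * R l)))"
proof -
  let ?A = "mat n n (\<lambda>(k, a). coeff (P k) a)"
  let ?H = "mat n n (\<lambda>(i, j). \<mu> (i + j))"
  let ?C = "mat n n (\<lambda>(b, l). coeff (R l) b)"
  have "?A * ?H * ?C = mat n n (\<lambda>(k, l). moment \<mu> (P k * R l))"
  proof -
    have "(\<Sum>b<n. (\<Sum>a<n. coeff (P k) a * \<mu> (a + b)) * coeff (R l) b) = moment \<mu> (P k * R l)"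
      if "k < n" "l < n" for k l
    proof -
      have "(\<Sum>b<n. (\<Sum>a<n. coeff (P k) a * \<mu> (a + b)) * coeff (R l) b)
          = (\<Sum>a<n. \<Sum>b<n. coeff (P k) a * coeff (R l) b * \<mu> (a + b))"
        unfolding sum_distrib_right by (subst sum.swap) (simp add: ac_simps)
      also have "\<dots> = moment \<mu> (P k * R l)"
        by (rule moment_mult[symmetric]) (use that P R in auto)
      finally show ?thesis .
    qed
    then show ?thesis
      unfolding mat_times_mat by (intro eq_matI) auto
  qed
  then have "det (mat n n (\<lambda>(k, l). moment \<mu> (P k * R l))) = det ?A * det ?H * det ?C"
    by (metis det_mult3 mat_carrier)
  then show ?thesis
    using det_coeff_mat_monic(1)[OF P] det_coeff_mat_monic(2)[OF R] by simp
qed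

lemma poly_eq_sum_lessThan:
  fixes p :: "'a::comm_semiring_1 poly"
  shows "degree p < K \<Longrightarrow> poly p x = (\<Sum>m<K. coeff p m * x ^ m)"
  unfolding poly_altdef by (rule sum.mono_neutral_left) (auto simp: coeff_eq_0)

lemma det_poly_eval_mat:
  assumes "\<And>l. l < n \<Longrightarrow> degree (P l) < n"
    and "det (mat n n (\<lambda>(m, l). coeff (P l) m)) = 1"
  shows "det (mat n n (\<lambda>(k, l). poly (P l) (x k))) = det (mat n n (\<lambda>(k, m). x k ^ m))"
proof -
  have "(\<Sum>m<n. x k ^ m * coeff (P l) m) = poly (P l) (x k)" if "l < n" for k l
    using poly_eq_sum_lessThan[OF assms(1)[OF that]] by (simp add: mult.commute)
  then have "mat n n (\<lambda>(k, m). x k ^ m) * mat n n (\<lambda>(m, l). coeff (P l) m)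
          = mat n n (\<lambda>(k, l). poly (P l) (x k))"
    unfolding mat_times_mat by (intro eq_matI) auto
  then show ?thesis
    using assms(2) by (metis det_mult mat_carrier mult.right_neutral)
qed

definition roots_poly :: "(nat \<Rightarrow> 'a::comm_ring_1) \<Rightarrow> nat \<Rightarrow> 'a poly" where
  "roots_poly r k = (\<Prod>i<k. [:- r i, 1:])"

lemma roots_poly_0 [simp]: "roots_poly r 0 = 1"
  by (simp add: roots_poly_def)

lemma roots_poly_Suc: "roots_poly r (Suc k) = roots_poly r k * [:- r k, 1:]"
  by (simp add: roots_poly_def)

lemma roots_poly_Suc_left: "roots_poly r (Suc k) = [:- r 0, 1:] * roots_poly (\<lambda>i. r (Suc i)) k"
  unfolding roots_poly_def by (subst prod.lessThan_Suc_shift) simp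

lemma poly_roots_poly: "poly (roots_poly r k) x = (\<Prod>i<k. x - r i)"
  by (simp add: roots_poly_def poly_prod)

lemma lead_coeff_roots_poly: "lead_coeff (roots_poly (r :: nat \<Rightarrow> 'a::idom) k) = 1"
  by (simp add: roots_poly_def lead_coeff_prod)

lemma degree_roots_poly: "degree (roots_poly (r :: nat \<Rightarrow> 'a::idom) k) = k"
  by (simp add: roots_poly_def degree_prod_eq_sum_degree)

lemma det_vandermonde:
  fixes x :: "nat \<Rightarrow> 'a::idom"
  shows "det (mat n n (\<lambda>(k, m). x k ^ m)) = (\<Prod>k<n. \<Prod>i<k. x k - x i)"
proof -
  have "det (mat n n (\<lambda>(k, m). x k ^ m)) = det (mat n n (\<lambda>(k, l). poly (roots_poly x l) (x k)))"
    by (rule det_poly_eval_mat[symmetric])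
       (simp_all add: degree_roots_poly det_coeff_mat_monic(2)[OF degree_roots_poly lead_coeff_roots_poly])
  also have "\<dots> = (\<Prod>k<n. \<Prod>i<k. x k - x i)"
    by (subst det_mat_lower_triangular) (auto simp: poly_roots_poly)
  finally show ?thesis .
qed

section \<open>The moments \<open>f(m,s,q)\<close>\<close>

locale hankel_moments = not_root_of_unity q for q :: "'a::field_char_0" +
  fixes s :: 'a
  assumes q_nonzero: "q \<noteq> 0"
begin

sublocale squares: not_root_of_unity "q\<^sup>2"
  by (rule power_not_root_of_unity) simp

abbreviation L :: "'a poly \<Rightarrow> 'a" where
  "L \<equiv> moment (\<lambda>m. f_fun m s q)"

lemma f_fun_0: "f_fun 0 s q = 1"
  by (simp add: f_fun_def)

text \<open>At \<open>m = 0\<close> the truncated index \<open>m - 1\<close> is harmless: its coefficient \<open>1 - q ^ 0\<close> vanishes.\<close>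

lemma f_fun_recurrence:
  "f_fun (Suc m) s q * (1 + q ^ Suc m) = (1 + s) * f_fun m s q - s * (1 - q ^ m) * f_fun (m - 1) s q"
proof (cases m)
  case 0
  have "1 + q \<noteq> 0"
    using one_plus_power_nonzero[of 1] by simp
  then show ?thesis
    using 0 by (simp add: f_fun_def qpoch_def)
next
  case (Suc k)
  define c where "c = qpoch (- q) q k"
  define x where "x = q ^ Suc k"
  define y where "y = q ^ Suc (Suc k)"
  have nz: "c \<noteq> 0" "1 + x \<noteq> 0" "1 + y \<noteq> 0"
    unfolding c_def x_def y_def
    by (rule qpoch_neg_self_nonzero, rule one_plus_power_nonzero, simp,
        rule one_plus_power_nonzero, simp)
  have f: "f_fun m s q = rogers_szego m s (q\<^sup>2) / qpoch (- q) q m" for m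
    by (simp add: f_fun_def rogers_szego_def)
  have c: "qpoch (- q) q (Suc k) = c * (1 + x)" "qpoch (- q) q (Suc (Suc k)) = c * (1 + x) * (1 + y)"
    by (simp_all add: qpoch_neg_Suc c_def x_def y_def)
  have qx: "(q\<^sup>2) ^ Suc k = x * x"
    by (simp add: x_def power_mult_distrib[symmetric] power2_eq_square)
  have "f_fun (Suc (Suc k)) s q * (1 + y) = (1 + s) * f_fun (Suc k) s q - s * (1 - x) * f_fun k s q"
    unfolding f c squares.rogers_szego_Suc_Suc qx c_def[symmetric] using nz
    by (simp add: divide_simps) (simp add: algebra_simps)
  then show ?thesis
    using Suc by (simp add: x_def y_def)
qed

lemma degree_dilate: "degree (pcompose p [:0, q:]) = degree p"
  using q_nonzero by (simp add: degree_pcompose)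

lemma coeff_dilate: "coeff (pcompose p [:0, q:]) m = q ^ m * coeff p m"
proof (induction p arbitrary: m)
  case (pCons c p)
  then show ?case
    by (cases m) (simp_all add: pcompose_pCons)
qed simp

text \<open>
  Here \<open>pcompose p [:0, q:]\<close> is \<open>p(qx)\<close> and \<open>pCons 0 r\<close> is \<open>x r\<close>: the recurrence of \<open>f\<close>,
  read through \<open>L\<close>, relates multiplication by \<open>x\<close> to the \<open>q\<close>-difference \<open>p(x) - p(qx)\<close>.
\<close>

lemma moment_dilation_identity:
  assumes r: "p - pcompose p [:0, q:] = pCons 0 r"
  shows "L (pCons 0 p) + q * L (pCons 0 (pcompose p [:0, q:])) = (1 + s) * L p - s * L r"
proof -
  define K where "K = Suc (Suc (degree p))"
  have "degree (pCons 0 r) \<le> degree p"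
    unfolding r[symmetric] using degree_diff_le_max[of p "pcompose p [:0, q:]"] degree_dilate by simp
  moreover have "degree r \<le> degree (pCons 0 r)"
    by simp
  ultimately have dr: "degree r < Suc (degree p)"
    by simp
  have dp: "degree p < K" "degree (pcompose p [:0, q:]) < K"
    by (simp_all add: K_def degree_dilate)
  have cr: "coeff (pCons 0 r) m = (1 - q ^ m) * coeff p m" for m
    using arg_cong[OF r, of "\<lambda>x. coeff x m"] by (simp add: coeff_dilate algebra_simps)
  have "L r = (\<Sum>m<Suc (degree p). coeff r m * f_fun m s q)"
    by (rule moment_eq_sum_lessThan[OF dr])
  also have "\<dots> = (\<Sum>m<K. coeff (pCons 0 r) m * f_fun (m - 1) s q)"
    unfolding K_def by (subst (2) sum.lessThan_Suc_shift) simp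
  finally have Lr: "L r = (\<Sum>m<K. (1 - q ^ m) * coeff p m * f_fun (m - 1) s q)"
    by (simp add: cr)
  have "L (pCons 0 p) + q * L (pCons 0 (pcompose p [:0, q:]))
      = (\<Sum>m<K. coeff p m * (f_fun (Suc m) s q * (1 + q ^ Suc m)))"
    by (simp add: moment_pCons_0[OF dp(1)] moment_pCons_0[OF dp(2)] coeff_dilate
        sum_distrib_left sum.distrib[symmetric] algebra_simps)
  also have "\<dots> = (\<Sum>m<K. (1 + s) * (coeff p m * f_fun m s q)
                          - s * ((1 - q ^ m) * coeff p m * f_fun (m - 1) s q))"
    unfolding f_fun_recurrence by (intro sum.cong refl) (simp add: algebra_simps)
  also have "\<dots> = (1 + s) * L p - s * L r"
    unfolding Lr moment_eq_sum_lessThan[OF dp(1)] by (simp only: sum_subtractf sum_distrib_left)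
  finally show ?thesis .
qed

abbreviation N :: "nat \<Rightarrow> 'a poly" where
  "N k \<equiv> roots_poly (\<lambda>i. q ^ i) k"

abbreviation M :: "nat \<Rightarrow> 'a poly" where
  "M l \<equiv> roots_poly (\<lambda>i. s * q ^ i) l"

abbreviation N' :: "nat \<Rightarrow> 'a poly" where
  "N' j \<equiv> roots_poly (\<lambda>i. q ^ Suc i) j"

definition alpha :: "nat \<Rightarrow> 'a" where
  "alpha k = (\<Prod>i<k. s - q ^ (2 * i + 1))"

definition beta :: "nat \<Rightarrow> 'a" where
  "beta l = (\<Prod>i<l. 1 - s * q ^ (2 * i + 1))"

lemma N_Suc_eq_N': "N (Suc j) = [:-1, 1:] * N' j"
  by (subst roots_poly_Suc_left) simp

lemma dilate_N': "pcompose (N' j) [:0, q:] = smult (q ^ j) (N j)"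
proof -
  have "(\<Prod>i<j. x * q - q ^ Suc i) = q ^ j * (\<Prod>i<j. x - q ^ i)" for x
    by (induction j) (simp_all add: algebra_simps)
  then show ?thesis
    by (intro poly_ext) (simp add: poly_pcompose poly_roots_poly del: power_Suc)
qed

lemma q_difference_N': "N' j - pcompose (N' j) [:0, q:] = pCons 0 (smult (1 - q ^ j) (N' (j - 1)))"
proof (cases j)
  case (Suc i)
  show ?thesis
    unfolding Suc dilate_N' N_Suc_eq_N'
    by (intro poly_ext) (simp add: roots_poly_Suc algebra_simps)
qed (simp add: pcompose_1)

lemma N'_eq_N: "N' j = N j + smult (1 - q ^ j) (N' (j - 1))"
proof (cases j)
  case (Suc i)
  show ?thesis
    unfolding Suc N_Suc_eq_N'
    by (intro poly_ext) (simp add: roots_poly_Suc algebra_simps)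
qed simp

lemma pCons_0_N: "pCons 0 (N j) = N (Suc j) + smult (q ^ j) (N j)"
  by (simp add: roots_poly_Suc)

lemma moment_N_Suc: "L (N (Suc j)) * (1 + q ^ Suc j) = (s - q ^ (2 * j + 1)) * L (N j)"
proof -
  let ?r = "smult (1 - q ^ j) (N' (j - 1))"
  have LN': "L (N' j) = L (N j) + L ?r"
    by (subst N'_eq_N) (simp add: moment_add)
  have xN': "pCons 0 (N' j) = N (Suc j) + N' j"
    by (simp add: N_Suc_eq_N')
  have shift: "L (pCons 0 (N' j)) = L (N (Suc j)) + L (N j) + L ?r"
    unfolding xN' moment_add LN' by (simp only: add.assoc)
  have dilated_shift: "L (pCons 0 (pcompose (N' j) [:0, q:])) = q ^ j * (L (N (Suc j)) + q ^ j * L (N j))"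
  proof -
    have "pCons 0 (smult (q ^ j) (N j)) = smult (q ^ j) (pCons 0 (N j))"
      by simp
    then show ?thesis
      by (simp only: dilate_N' moment_smult pCons_0_N moment_add)
  qed
  have odd_power: "q ^ (2 * j + 1) = q * q ^ j * q ^ j"
    by (simp add: power_add mult_2)
  show ?thesis
    using moment_dilation_identity[OF q_difference_N'[of j]]
    unfolding shift dilated_shift LN' odd_power by (simp add: algebra_simps)
qed

lemma moment_N: "L (N k) = alpha k / qpoch (- q) q k"
proof (induction k)
  case 0
  then show ?case
    by (simp add: alpha_def f_fun_0)
next
  case (Suc k)
  have nz: "1 + q ^ Suc k \<noteq> 0" "qpoch (- q) q k \<noteq> 0"
    by (rule one_plus_power_nonzero, simp, rule qpoch_neg_self_nonzero)
  then have "L (N (Suc k)) = (s - q ^ (2 * k + 1)) * L (N k) / (1 + q ^ Suc k)"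
    using moment_N_Suc[of k] by (simp add: field_simps)
  then show ?case
    unfolding Suc.IH using nz by (simp add: alpha_def qpoch_neg_Suc field_simps)
qed

lemma moment_N_mult_M: "L (N k * M l) = alpha k * beta l * q ^ (k * l) / qpoch (- q) q (k + l)"
proof (induction l arbitrary: k)
  case 0
  then show ?case
    by (simp add: moment_N beta_def)
next
  case (Suc l)
  define X where "X = q ^ k"
  define Y where "Y = q ^ l"
  define Z where "Z = q ^ (k * l)"
  define C where "C = qpoch (- q) q (k + l)"
  have nz: "C \<noteq> 0" "1 + q * X * Y \<noteq> 0"
    using qpoch_neg_self_nonzero one_plus_power_nonzero[of "Suc (k + l)"]
    by (auto simp: C_def X_def Y_def power_add mult.assoc)
  have "q ^ (2 * k + 1) = q * X * X" "q ^ (2 * l + 1) = q * Y * Y"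
    by (simp_all add: X_def Y_def power_add mult_2)
  then have alpha: "alpha (Suc k) = alpha k * (s - q * X * X)"
    and beta: "beta (Suc l) = beta l * (1 - s * (q * Y * Y))"
    by (simp_all add: alpha_def beta_def)
  have C: "qpoch (- q) q (Suc k + l) = C * (1 + q * X * Y)"
    "qpoch (- q) q (k + Suc l) = C * (1 + q * X * Y)"
    by (simp_all add: C_def X_def Y_def qpoch_neg_Suc power_add algebra_simps)
  have Z: "q ^ (Suc k * l) = Z * Y" "q ^ (k * Suc l) = Z * X"
    by (simp_all add: X_def Y_def Z_def power_add)
  have "N k * M (Suc l) = N (Suc k) * M l + smult (q ^ k - s * q ^ l) (N k * M l)"
    by (intro poly_ext) (simp add: roots_poly_Suc algebra_simps)
  then have "L (N k * M (Suc l)) = L (N (Suc k) * M l) + (X - s * Y) * L (N k * M l)"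
    by (simp add: moment_add moment_smult X_def Y_def)
  also have "\<dots> = alpha k * (s - q * X * X) * beta l * (Z * Y) / (C * (1 + q * X * Y))
                   + (X - s * Y) * (alpha k * beta l * Z / C)"
    unfolding Suc.IH alpha C Z Z_def C_def ..
  also have "\<dots> = alpha k * (beta l * (1 - s * (q * Y * Y))) * (Z * X) / (C * (1 + q * X * Y))"
    using nz by (simp add: divide_simps) (simp add: algebra_simps)
  also have "\<dots> = alpha k * beta (Suc l) * q ^ (k * Suc l) / qpoch (- q) q (k + Suc l)"
    unfolding beta C Z ..
  finally show ?case .
qed

section \<open>Evaluation of the Hankel determinant\<close>

definition tail_poly :: "nat \<Rightarrow> nat \<Rightarrow> 'a poly" where
  "tail_poly n l = monom 1 l * (\<Prod>i\<in>{Suc l..n}. [:1, q ^ i:])"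

lemma poly_tail_poly: "poly (tail_poly n l) x = x ^ l * (\<Prod>i\<in>{Suc l..n}. 1 + q ^ i * x)"
  by (simp add: tail_poly_def poly_monom poly_prod mult.commute)

lemma degree_tail_poly: "l \<le> n \<Longrightarrow> degree (tail_poly n l) \<le> n"
proof -
  assume "l \<le> n"
  have "degree (\<Prod>i\<in>{Suc l..n}. [:1, q ^ i:]) \<le> (\<Sum>i\<in>{Suc l..n}. degree [:1, q ^ i:])"
    using degree_prod_sum_le[of "{Suc l..n}" "\<lambda>i. [:1, q ^ i:]"] by (simp add: o_def)
  also have "\<dots> \<le> n - l"
    using sum_mono[of "{Suc l..n}" "\<lambda>i. degree [:1, q ^ i:]" "\<lambda>_. 1"] by simp
  finally show ?thesis
    using \<open>l \<le> n\<close> degree_mult_le[of "monom 1 l" "\<Prod>i\<in>{Suc l..n}. [:1, q ^ i:]"]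
      degree_monom_le[of "1::'a" l]
    unfolding tail_poly_def by arith
qed

lemma det_coeff_mat_tail_poly: "det (mat (Suc n) (Suc n) (\<lambda>(m, l). coeff (tail_poly n l) m)) = 1"
proof -
  have "coeff (\<Prod>i\<in>{Suc l..n}. [:1, q ^ i:]) 0 = 1" for l
    by (simp add: poly_0_coeff_0[symmetric] poly_prod)
  then show ?thesis
    by (subst det_mat_lower_triangular) (simp_all add: tail_poly_def coeff_monom_mult)
qed

lemma moment_N_mult_M_factored:
  assumes "l \<le> n"
  shows "L (N k * M l) = alpha k / qpoch (- q) q (k + n) * poly (tail_poly n l) (q ^ k) * beta l"
proof -
  define P where "P = (\<Prod>i\<in>{Suc l..n}. 1 + q ^ i * q ^ k)"
  have split: "qpoch (- q) q (k + n) = qpoch (- q) q (k + l) * P"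
    unfolding P_def using assms by (rule qpoch_neg_split)
  then have "qpoch (- q) q (k + l) \<noteq> 0" "P \<noteq> 0"
    using qpoch_neg_self_nonzero[of "k + n"] by auto
  then show ?thesis
    by (simp add: moment_N_mult_M poly_tail_poly split P_def[symmetric] power_mult field_simps)
qed

lemma hankel_d_eq_prod:
  "hankel_d n s q = (\<Prod>k<Suc n. alpha k / qpoch (- q) q (k + n))
                      * (\<Prod>k<Suc n. \<Prod>i<k. q ^ k - q ^ i) * (\<Prod>k<Suc n. beta k)"
proof -
  have "hankel_d n s q = det (mat (Suc n) (Suc n) (\<lambda>(k, l). L (N k * M l)))"
    using det_hankel_eq_det_moment_mult[where P = N and R = M and n = "Suc n" and \<mu> = "\<lambda>m. f_fun m s q",
        OF degree_roots_poly lead_coeff_roots_poly degree_roots_poly lead_coeff_roots_poly]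
    by (simp add: hankel_d_def)
  also have "mat (Suc n) (Suc n) (\<lambda>(k, l). L (N k * M l))
      = mat (Suc n) (Suc n) (\<lambda>(k, l). alpha k / qpoch (- q) q (k + n)
                               * poly (tail_poly n l) (q ^ k) * beta l)"
    by (rule eq_matI) (auto simp: moment_N_mult_M_factored less_Suc_eq_le)
  also have "det \<dots> = (\<Prod>k<Suc n. alpha k / qpoch (- q) q (k + n))
      * det (mat (Suc n) (Suc n) (\<lambda>(k, m). (q ^ k) ^ m)) * (\<Prod>k<Suc n. beta k)"
    by (simp only: det_mat_scaled[where A = "\<lambda>(k, l). poly (tail_poly n l) (q ^ k)", simplified]
        det_poly_eval_mat degree_tail_poly det_coeff_mat_tail_poly less_Suc_eq_le)
  finally show ?thesis
    by (simp add: det_vandermonde)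
qed

text \<open>
  The first half of (s q^(1-2j); q^2)_(2j) is \<open>alpha j\<close> read backwards, up to the sign and the
  power q^(j*j); the second half is \<open>beta j\<close>.
\<close>

lemma qpoch_eq_alpha_beta:
  "qpoch (s / (q powi (2 * int j - 1))) (q\<^sup>2) (2 * j) * q ^ (j * j) = (-1) ^ j * alpha j * beta j"
proof (cases "j = 0")
  case False
  define e where "e = 2 * j - 1"
  have "q powi (2 * int j - 1) = q ^ e"
    using False by (simp add: e_def power_int_of_nat[symmetric])
  define h where "h i = 1 - (q\<^sup>2) ^ i * (s / q ^ e)" for i
  have qe: "q ^ e \<noteq> 0"
    using q_nonzero by simp
  have first_half: "h (j - Suc i) * q ^ (2 * i + 1) = - (s - q ^ (2 * i + 1))" if "i < j" for i
  proof -
    have "e = 2 * (j - Suc i) + (2 * i + 1)"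
      using that by (simp add: e_def)
    then have "q ^ e = (q\<^sup>2) ^ (j - Suc i) * q ^ (2 * i + 1)"
      by (simp only: power_add power_mult)
    then show ?thesis
      using qe by (simp add: h_def field_simps)
  qed
  have second_half: "h (j + i) = 1 - s * q ^ (2 * i + 1)" for i
  proof -
    have "2 * (j + i) = e + (2 * i + 1)"
      using False by (simp add: e_def)
    then have "(q\<^sup>2) ^ (j + i) = q ^ e * q ^ (2 * i + 1)"
      by (metis power_add power_mult)
    then show ?thesis
      using qe by (simp add: h_def field_simps)
  qed
  have "q ^ (j * j) = (\<Prod>i<j. q ^ (2 * i + 1))"
    unfolding sum_odd_lessThan[symmetric] by (rule power_sum)
  then have "(\<Prod>i<j. h i) * q ^ (j * j) = (\<Prod>i<j. h (j - Suc i) * q ^ (2 * i + 1))"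
    by (simp only: prod.nat_diff_reindex prod.distrib)
  also have "\<dots> = (\<Prod>i<j. - (s - q ^ (2 * i + 1)))"
    by (intro prod.cong refl first_half) simp
  also have "\<dots> = (-1) ^ j * alpha j"
    by (simp only: prod_uminus_lessThan alpha_def)
  finally have "(\<Prod>i<j. h i) * q ^ (j * j) = (-1) ^ j * alpha j" .
  moreover have "qpoch (s / (q powi (2 * int j - 1))) (q\<^sup>2) (2 * j) = (\<Prod>i<j. h i) * (\<Prod>i<j. h (j + i))"
    unfolding \<open>q powi (2 * int j - 1) = q ^ e\<close>
    by (simp only: qpoch_def h_def mult_2 prod_lessThan_add)
  ultimately show ?thesis
    unfolding second_half by (simp add: beta_def algebra_simps)
qed (simp add: alpha_def beta_def)

lemma hankel_prod_factor:
  "alpha k / c * (\<Prod>i<k. q ^ k - q ^ i) * beta k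
     = q ^ (k * k + (\<Sum>i<k. i)) * qpoch (s / (q powi (2 * int k - 1))) (q\<^sup>2) (2 * k) * qpoch q q k / c"
proof -
  have "(-1 :: 'a) ^ k * (-1) ^ k = 1"
    by (simp flip: power_mult_distrib)
  then show ?thesis
    using qpoch_eq_alpha_beta[of k] by (simp add: prod_power_diff power_add algebra_simps)
qed

end

lemma triangular_exponent: "n\<^sup>2 * (n + 1) div 2 = (\<Sum>k<Suc n. k * k + (\<Sum>i<k. i :: nat))"
proof -
  have triangle: "2 * (\<Sum>i<k. i) = k * (k - 1)" for k :: nat
  proof (induction k)
    case (Suc k)
    then show ?case
      by (cases k) (simp_all add: algebra_simps)
  qed simp
  have "2 * (\<Sum>k<Suc n. k * k + (\<Sum>i<k. i)) = n\<^sup>2 * (n + 1)"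
  proof (induction n)
    case (Suc n)
    have "2 * (\<Sum>k<Suc (Suc n). k * k + (\<Sum>i<k. i))
        = n\<^sup>2 * (n + 1) + 2 * (Suc n * Suc n) + Suc n * n"
      using Suc triangle[of "Suc n"] by (simp add: algebra_simps)
    also have "\<dots> = (Suc n)\<^sup>2 * (Suc n + 1)"
      by (simp add: power2_eq_square algebra_simps)
    finally show ?case .
  qed simp
  then show ?thesis
    by simp
qed

theorem theorem3p1:
  fixes q s :: "'a::field_char_0" and n :: nat
  assumes "q \<noteq> 0" and "\<forall>k::nat. k \<ge> 1 \<longrightarrow> q ^ k \<noteq> 1"
  shows "hankel_d n s q =
    q ^ (n\<^sup>2 * (n + 1) div 2) *
    (\<Prod>j=0..n. qpoch (s / (q powi (2 * int j - 1))) (q\<^sup>2) (2 * j)) *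
    (\<Prod>j=0..n. qpoch q q j) /
    (\<Prod>j=0..n. qpoch (- q) q (j + n))"
proof -
  interpret hankel_moments q s
    using assms by unfold_locales auto
  have "hankel_d n s q = (\<Prod>k<Suc n. q ^ (k * k + (\<Sum>i<k. i))
          * qpoch (s / (q powi (2 * int k - 1))) (q\<^sup>2) (2 * k) * qpoch q q k / qpoch (- q) q (k + n))"
    unfolding hankel_d_eq_prod prod.distrib[symmetric] by (intro prod.cong refl) (rule hankel_prod_factor)
  also have "\<dots> = q ^ (\<Sum>k<Suc n. k * k + (\<Sum>i<k. i))
      * (\<Prod>k<Suc n. qpoch (s / (q powi (2 * int k - 1))) (q\<^sup>2) (2 * k))
      * (\<Prod>k<Suc n. qpoch q q k) / (\<Prod>k<Suc n. qpoch (- q) q (k + n))"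
    by (simp only: prod.distrib prod_dividef power_sum)
  finally show ?thesis
    by (simp only: triangular_exponent atLeast0AtMost lessThan_Suc_atMost)
qed

end
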